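(* Let $S$ be an LAD-AG-groupoid. Then $S$ is right commutative, i.e. $a(bc)=a(cb)$ for all $a,b,c\in S$.
   Context: A groupoid is a set $S$ with a binary operation written as juxtaposition ($ab$, also $a\cdot b$); $ab\cdot c$ means $(ab)c$ and $a\cdot bc$ means $a(bc)$. An AG-groupoid is a groupoid satisfying the left invertive law $(ab)c=(cb)a$ for all $a,b,c\in S$. An LAD-AG-groupoid (left abelian distributive AG-groupoid) is an AG-groupoid satisfying $a(bc)=(ab)(ca)$ for all $a,b,c\in S$. *)

theory Defs
  imports Main
begin

definition AG_groupoid :: "('a \<Rightarrow> 'a \<Rightarrow> 'a) \<Rightarrow> bool" where
  "AG_groupoid m \<longleftrightarrow> (\<forall>a b c. m (m a b) c = m (m c b) a)"

definition LAD_AG_groupoid :: "('a \<Rightarrow> 'a \<Rightarrow> 'a) \<Rightarrow> bool" where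
  "LAD_AG_groupoid m \<longleftrightarrow> AG_groupoid m \<and>
     (\<forall>a b c. m a (m b c) = m (m a b) (m c a))"

definition right_commutative :: "('a \<Rightarrow> 'a \<Rightarrow> 'a) \<Rightarrow> bool" where
  "right_commutative m \<longleftrightarrow> (\<forall>a b c. m a (m b c) = m a (m c b))"

end

theory Submission
  imports Defs
begin

text \<open>In an LAD-AG-groupoid, expanding \<open>a(bc)\<close> by left
  distributivity and applying mediality swaps \<open>b\<close> and \<open>c\<close>:
  \<open>a(bc) = (ab)(ca) = (ac)(ba) = a(cb)\<close>.\<close>

lemma AG_groupoid_medial:
  assumes "AG_groupoid m"
  shows "m (m a b) (m c d) = m (m a c) (m b d)"
proof -
  have left_invertive: "\<And>x y z. m (m x y) z = m (m z y) x"
    using assms unfolding AG_groupoid_def by blast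
  have "m (m a b) (m c d) = m (m (m c d) b) a" by (rule left_invertive)
  also have "\<dots> = m (m (m b d) c) a" by (simp only: left_invertive)
  also have "\<dots> = m (m a c) (m b d)" by (rule left_invertive)
  finally show ?thesis .
qed

theorem mainTheorem1:
  fixes m :: "'a \<Rightarrow> 'a \<Rightarrow> 'a"
  assumes "LAD_AG_groupoid m"
  shows "right_commutative m"
  unfolding right_commutative_def
proof (intro allI)
  fix a b c
  have AG: "AG_groupoid m"
    and left_distrib: "\<And>x y z. m x (m y z) = m (m x y) (m z x)"
    using assms unfolding LAD_AG_groupoid_def by blast+
  have "m a (m b c) = m (m a b) (m c a)" by (rule left_distrib)
  also have "\<dots> = m (m a c) (m b a)" using AG by (rule AG_groupoid_medial)
  also have "\<dots> = m a (m c b)" by (rule left_distrib[symmetric])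
  finally show "m a (m b c) = m a (m c b)" .
qed

end
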